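(* Let $d\ge1$, $A=d$, and consider the MDP and model class described in the context. Let $\theta\in[-1,1]^d$ be arbitrary (e.g., the parameter output by any, possibly stochastic, algorithm that outputs a model $T_\theta$ in the class), and let $\pi_\theta$ be the greedy policy with respect to $T_\theta$, with ties broken uniformly at random. Then $$\max_{\pi}\eta(T^\star,\pi)-\eta(T^\star,\pi_\theta)\ge\frac{(A-1)\gamma^2}{A(1-\gamma)}.$$
   Context: MDP: states $\mathcal{S}=\{s_0,s_1,\dots,s_d\}\cup\{s_g,s_b\}$, actions $a_1,\dots,a_d$ ($A=d$ actions), discount $\gamma\in[0,1)$, fixed initial state $s_0$. True deterministic dynamics $T^\star$: $T^\star(s_0,a_i)=s_i$; $T^\star(s_i,a_j)=s_g$ if $i=j$ and $s_b$ if $i\ne j$ ($i,j\in[d]$); $T^\star(s_g,a_i)=s_g$, $T^\star(s_b,a_i)=s_b$. Reward $r(s,a_i)=\mathbf{1}\{s=s_g\}$. For a policy $\pi$ and dynamics $T$, $\eta(T,\pi)=\mathbb{E}[\sum_{t\ge0}\gamma^t r(s_t,a_t)\mid s_0,\ a_t\sim\pi(s_t),\ s_{t+1}\sim T(s_t,a_t)]$. Model class $\{T_\theta:\theta\in[-1,1]^d\}$: for $i,j\in[d]$, $T_\theta(s_i,a_j)=s_g$ with probability $\frac12(1+e_j^\top\theta)$ and $s_b$ with probability $\frac12(1-e_j^\top\theta)$, where $e_j$ is the $j$-th standard basis vector; on $s_0,s_g,s_b$, $T_\theta$ coincides with $T^\star$. The greedy policy $\pi_\theta$ w.r.t. $T_\theta$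 is the optimal policy of the MDP with dynamics $T_\theta$ and reward $r$, where at each state it selects uniformly at random among the actions maximizing the optimal $Q$-function of $T_\theta$. The maximum over $\pi$ ranges over all policies. *)

theory Defs
  imports Complex_Main
begin

datatype st = S0 | Si nat | SG | SB

definition states :: "nat \<Rightarrow> st set" where
  "states d = {S0, SG, SB} \<union> Si ` {1..d}"

definition actions :: "nat \<Rightarrow> nat set" where
  "actions d = {1..d}"

text \<open>Transition kernels: T s a s' = probability of moving to s' from s under action a.\<close>
type_synonym kernel = "st \<Rightarrow> nat \<Rightarrow> st \<Rightarrow> real"

fun nxt :: "st \<Rightarrow> nat \<Rightarrow> st" where
  "nxt S0 a = Si a"
| "nxt (Si i) a = (if i = a then SG else SB)"
| "nxt SG a = SG"
| "nxt SB a = SB"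

definition Tstar :: kernel where
  "Tstar s a s' = (if s' = nxt s a then 1 else 0)"

definition Ttheta :: "(nat \<Rightarrow> real) \<Rightarrow> kernel" where
  "Ttheta \<theta> s a s' = (case s of
      Si i \<Rightarrow> (if s' = SG then (1 + \<theta> a) / 2 else if s' = SB then (1 - \<theta> a) / 2 else 0)
    | _ \<Rightarrow> Tstar s a s')"

definition rew :: "st \<Rightarrow> nat \<Rightarrow> real" where
  "rew s a = (if s = SG then 1 else 0)"

text \<open>(Stationary, randomized, Markov) policies: pi s a = probability of action a at state s.\<close>
definition policies :: "nat \<Rightarrow> (st \<Rightarrow> nat \<Rightarrow> real) set" where
  "policies d = {\<pi>. \<forall>s \<in> states d. (\<forall>a \<in> actions d. 0 \<le> \<pi> s a) \<and> (\<Sum>a\<in>actions d. \<pi> s a) = 1}"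

definition step :: "nat \<Rightarrow> kernel \<Rightarrow> (st \<Rightarrow> nat \<Rightarrow> real) \<Rightarrow> (st \<Rightarrow> real) \<Rightarrow> (st \<Rightarrow> real)" where
  "step d T \<pi> \<mu> s' = (\<Sum>s\<in>states d. \<Sum>a\<in>actions d. \<mu> s * \<pi> s a * T s a s')"

definition distr :: "nat \<Rightarrow> kernel \<Rightarrow> (st \<Rightarrow> nat \<Rightarrow> real) \<Rightarrow> (st \<Rightarrow> real) \<Rightarrow> nat \<Rightarrow> (st \<Rightarrow> real)" where
  "distr d T \<pi> \<mu> t = (step d T \<pi> ^^ t) \<mu>"

definition eta_from :: "nat \<Rightarrow> real \<Rightarrow> kernel \<Rightarrow> (st \<Rightarrow> nat \<Rightarrow> real) \<Rightarrow> (st \<Rightarrow> real) \<Rightarrow> real" where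
  "eta_from d \<gamma> T \<pi> \<mu> =
     (\<Sum>t. \<gamma> ^ t * (\<Sum>s\<in>states d. \<Sum>a\<in>actions d. distr d T \<pi> \<mu> t s * \<pi> s a * rew s a))"

definition eta :: "nat \<Rightarrow> real \<Rightarrow> kernel \<Rightarrow> (st \<Rightarrow> nat \<Rightarrow> real) \<Rightarrow> real" where
  "eta d \<gamma> T \<pi> = eta_from d \<gamma> T \<pi> (\<lambda>s. if s = S0 then 1 else 0)"

definition Q_pi :: "nat \<Rightarrow> real \<Rightarrow> kernel \<Rightarrow> (st \<Rightarrow> nat \<Rightarrow> real) \<Rightarrow> st \<Rightarrow> nat \<Rightarrow> real" where
  "Q_pi d \<gamma> T \<pi> s a = rew s a + \<gamma> * eta_from d \<gamma> T \<pi> (\<lambda>s'. T s a s')"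

definition Q_star :: "nat \<Rightarrow> real \<Rightarrow> kernel \<Rightarrow> st \<Rightarrow> nat \<Rightarrow> real" where
  "Q_star d \<gamma> T s a = (SUP \<pi>\<in>policies d. Q_pi d \<gamma> T \<pi> s a)"

definition greedy_set :: "nat \<Rightarrow> real \<Rightarrow> kernel \<Rightarrow> st \<Rightarrow> nat set" where
  "greedy_set d \<gamma> T s = {a \<in> actions d. \<forall>b \<in> actions d. Q_star d \<gamma> T s b \<le> Q_star d \<gamma> T s a}"

definition greedy :: "nat \<Rightarrow> real \<Rightarrow> kernel \<Rightarrow> st \<Rightarrow> nat \<Rightarrow> real" where
  "greedy d \<gamma> T s a = (if a \<in> greedy_set d \<gamma> T s then 1 / real (card (greedy_set d \<gamma> T s)) else 0)"

end

theory Submission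
  imports Defs
begin

(* Under the true dynamics reward starts at time 2, after reaching s_g, which a policy pi does with
   probability goal_prob = sum_a pi(s_0,a) pi(s_a,a); so its return is goal_prob * gamma^2/(1-gamma),
   and the optimum is gamma^2/(1-gamma).  Under any model T_theta the value of a first action a depends
   only on the policy's behaviour at s_a, and the behaviours available there are the same for every a.
   Hence all first actions tie and the greedy policy is uniform at s_0; it also acts identically at
   every s_i, since T_theta(s_i, .) does not depend on i. *)

lemma states_eq: "states d = {S0, SG, SB} \<union> Si ` actions d"
  by (simp add: states_def actions_def)

lemma finite_states [simp]: "finite (states d)"
  by (simp add: states_eq actions_def)

lemma finite_actions [simp]: "finite (actions d)"
  by (simp add: actions_def)

lemma card_actions [simp]: "card (actions d) = d"
  by (simp add: actions_def)

lemma policy_sum_eq_one: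
  "\<pi> \<in> policies d \<Longrightarrow> s \<in> states d \<Longrightarrow> (\<Sum>a\<in>actions d. \<pi> s a) = 1"
  by (simp add: policies_def)

lemma policy_nonneg:
  "\<pi> \<in> policies d \<Longrightarrow> s \<in> states d \<Longrightarrow> a \<in> actions d \<Longrightarrow> 0 \<le> \<pi> s a"
  by (simp add: policies_def)

lemma policy_le_one:
  assumes "\<pi> \<in> policies d" "s \<in> states d" "a \<in> actions d"
  shows "\<pi> s a \<le> 1"
proof -
  have "\<pi> s a \<le> (\<Sum>b\<in>actions d. \<pi> s b)"
    by (rule member_le_sum) (use assms policy_nonneg in auto)
  then show ?thesis using policy_sum_eq_one[OF assms(1,2)] by simp
qed

lemma policy_rows_eq:
  assumes "s \<in> states d" "s' \<in> states d"
  shows "(\<lambda>\<pi>. \<pi> s) ` policies d = (\<lambda>\<pi>. \<pi> s') ` policies d"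
proof -
  have "(\<lambda>\<pi>. \<pi> s) ` policies d \<subseteq> (\<lambda>\<pi>. \<pi> s') ` policies d"
    if "s \<in> states d" for s s'
  proof
    fix \<rho> assume "\<rho> \<in> (\<lambda>\<pi>. \<pi> s) ` policies d"
    then obtain \<pi> where \<pi>: "\<pi> \<in> policies d" and \<rho>: "\<rho> = \<pi> s" by blast
    have "\<pi>(s' := \<pi> s) \<in> policies d"
      using \<pi> that by (auto simp: policies_def)
    then show "\<rho> \<in> (\<lambda>\<pi>. \<pi> s') ` policies d"
      using \<rho> by (metis fun_upd_same image_eqI)
  qed
  then show ?thesis using assms by blast
qed

lemma sums_delayed_geometric:
  fixes \<gamma> c :: real
  assumes "\<bar>\<gamma>\<bar> < 1"
  shows "(\<lambda>t. \<gamma> ^ t * (if t < k then 0 else c)) sums (c * \<gamma> ^ k / (1 - \<gamma>))"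
    (is "?f sums _")
proof -
  have "(\<lambda>i. c * \<gamma> ^ k * \<gamma> ^ i) sums (c * \<gamma> ^ k * (1 / (1 - \<gamma>)))"
    by (intro sums_mult geometric_sums) (use assms in simp)
  then have "(\<lambda>i. ?f (i + k)) sums (c * \<gamma> ^ k / (1 - \<gamma>))"
    by (simp add: power_add mult_ac)
  then show ?thesis
    using sums_iff_shift[of ?f k "c * \<gamma> ^ k / (1 - \<gamma>)"] by simp
qed

lemma distr_Suc: "distr d T \<pi> \<mu> (Suc t) = step d T \<pi> (distr d T \<pi> \<mu> t)"
  by (simp add: distr_def)

lemma step_supported:
  assumes "A \<subseteq> states d" and "\<And>s. s \<notin> A \<Longrightarrow> \<mu> s = 0"
  shows "step d T \<pi> \<mu> s' = (\<Sum>s\<in>A. \<Sum>a\<in>actions d. \<mu> s * \<pi> s a * T s a s')"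
  unfolding step_def by (rule sum.mono_neutral_right) (use assms in auto)

lemma step_point_mass:
  assumes "s \<in> states d"
  shows "step d T \<pi> (\<lambda>s'. if s' = s then 1 else 0) s' = (\<Sum>a\<in>actions d. \<pi> s a * T s a s')"
  by (subst step_supported[where A = "{s}"]) (use assms in auto)

lemma step_absorbed:
  assumes "\<And>a. T SG a = Tstar SG a" "\<And>a. T SB a = Tstar SB a" "\<pi> \<in> policies d"
    and "\<And>s. s \<notin> {SG, SB} \<Longrightarrow> \<mu> s = 0"
  shows "step d T \<pi> \<mu> = \<mu>"
proof
  fix s'
  have "{SG, SB} \<subseteq> states d" by (simp add: states_eq)
  then have "step d T \<pi> \<mu> s' = (\<Sum>s\<in>{SG, SB}. \<Sum>a\<in>actions d. \<mu> s * \<pi> s a * T s a s')"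
    by (rule step_supported) (use assms(4) in blast)
  also have "\<dots> = (if s' = SG then \<mu> SG else 0) + (if s' = SB then \<mu> SB else 0)"
    using assms(1-3) policy_sum_eq_one[OF assms(3), of SG] policy_sum_eq_one[OF assms(3), of SB]
    by (simp add: Tstar_def states_eq sum_distrib_left[symmetric])
  also have "\<dots> = \<mu> s'"
    using assms(4)[of s'] by auto
  finally show "step d T \<pi> \<mu> s' = \<mu> s'" .
qed

lemma distr_absorbed:
  assumes "\<And>a. T SG a = Tstar SG a" "\<And>a. T SB a = Tstar SB a" "\<pi> \<in> policies d"
    and "\<And>s. s \<notin> {SG, SB} \<Longrightarrow> distr d T \<pi> \<mu> k s = 0" and "k \<le> t"
  shows "distr d T \<pi> \<mu> t = distr d T \<pi> \<mu> k"
  using assms(5)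
proof (induction t rule: dec_induct)
  case (step t)
  have "distr d T \<pi> \<mu> (Suc t) = step d T \<pi> (distr d T \<pi> \<mu> t)"
    by (rule distr_Suc)
  also have "\<dots> = distr d T \<pi> \<mu> t"
    by (rule step_absorbed) (use assms step.IH in auto)
  finally show ?case using step.IH by simp
qed simp

lemma expected_reward:
  assumes "\<pi> \<in> policies d"
  shows "(\<Sum>s\<in>states d. \<Sum>a\<in>actions d. \<mu> s * \<pi> s a * rew s a) = \<mu> SG"
proof -
  have "(\<Sum>s\<in>states d. \<Sum>a\<in>actions d. \<mu> s * \<pi> s a * rew s a)
      = (\<Sum>s\<in>{SG}. \<Sum>a\<in>actions d. \<mu> s * \<pi> s a * rew s a)"
    by (rule sum.mono_neutral_right) (auto simp: states_eq rew_def)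
  also have "\<dots> = \<mu> SG"
    using policy_sum_eq_one[OF assms, of SG] by (simp add: rew_def states_eq sum_distrib_left[symmetric])
  finally show ?thesis .
qed

lemma eta_from_eq_suminf:
  "\<pi> \<in> policies d \<Longrightarrow> eta_from d \<gamma> T \<pi> \<mu> = (\<Sum>t. \<gamma> ^ t * distr d T \<pi> \<mu> t SG)"
  by (simp add: eta_from_def expected_reward)

definition goal_prob :: "nat \<Rightarrow> (st \<Rightarrow> nat \<Rightarrow> real) \<Rightarrow> real" where
  "goal_prob d \<pi> = (\<Sum>a\<in>actions d. \<pi> S0 a * \<pi> (Si a) a)"

lemma distr_Tstar_1:
  "distr d Tstar \<pi> (\<lambda>s. if s = S0 then 1 else 0) (Suc 0)
    = (\<lambda>s'. \<Sum>a\<in>actions d. if s' = Si a then \<pi> S0 a else 0)"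
  by (rule ext) (auto simp: distr_def step_point_mass states_eq Tstar_def intro!: sum.cong)

lemma distr_Tstar_2:
  "distr d Tstar \<pi> (\<lambda>s. if s = S0 then 1 else 0) 2 s'
    = (\<Sum>i\<in>actions d. \<pi> S0 i * (\<Sum>c\<in>actions d. \<pi> (Si i) c * Tstar (Si i) c s'))"
proof -
  define \<mu>1 where "\<mu>1 = distr d Tstar \<pi> (\<lambda>s. if s = S0 then 1 else 0) (Suc 0)"
  have "distr d Tstar \<pi> (\<lambda>s. if s = S0 then 1 else 0) 2 s' = step d Tstar \<pi> \<mu>1 s'"
    by (simp add: \<mu>1_def numeral_2_eq_2 distr_Suc[of _ _ _ _ "Suc 0"])
  also have "\<dots> = (\<Sum>s\<in>Si ` actions d. \<Sum>c\<in>actions d. \<mu>1 s * \<pi> s c * Tstar s c s')"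
    by (rule step_supported) (auto simp: \<mu>1_def distr_Tstar_1 states_eq intro!: sum.neutral)
  also have "\<dots> = (\<Sum>i\<in>actions d. \<Sum>c\<in>actions d. \<mu>1 (Si i) * \<pi> (Si i) c * Tstar (Si i) c s')"
    by (simp add: sum.reindex inj_on_def)
  also have "\<dots> = (\<Sum>i\<in>actions d. \<pi> S0 i * (\<Sum>c\<in>actions d. \<pi> (Si i) c * Tstar (Si i) c s'))"
    unfolding sum_distrib_left
    by (intro sum.cong) (simp_all add: \<mu>1_def distr_Tstar_1 mult.assoc)
  finally show ?thesis .
qed

lemma distr_Tstar_SG:
  assumes \<pi>: "\<pi> \<in> policies d"
  shows "distr d Tstar \<pi> (\<lambda>s. if s = S0 then 1 else 0) t SG = (if t < 2 then 0 else goal_prob d \<pi>)"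
proof -
  define \<mu> where "\<mu> = distr d Tstar \<pi> (\<lambda>s. if s = S0 then 1 else 0)"
  have absorbed: "\<mu> t = \<mu> 2" if "2 \<le> t" for t
    unfolding \<mu>_def
    by (rule distr_absorbed)
      (use \<pi> that in \<open>auto simp: distr_Tstar_2 Tstar_def intro!: sum.neutral\<close>)
  have "\<mu> 2 SG = goal_prob d \<pi>"
  proof -
    have "(\<Sum>c\<in>actions d. \<pi> (Si i) c * Tstar (Si i) c SG)
        = (\<Sum>c\<in>actions d. if c = i then \<pi> (Si i) c else 0)" for i
      by (rule sum.cong) (auto simp: Tstar_def)
    then show ?thesis
      unfolding \<mu>_def distr_Tstar_2 goal_prob_def by (auto intro!: sum.cong)
  qed
  moreover have "\<mu> 0 SG = 0" "\<mu> (Suc 0) SG = 0"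
    by (simp_all add: \<mu>_def distr_Tstar_1) (simp add: distr_def)
  ultimately show ?thesis
    using absorbed[of t] less_2_cases[of t] unfolding \<mu>_def by (cases "t < 2") auto
qed

lemma eta_Tstar:
  assumes "\<pi> \<in> policies d" and "\<bar>\<gamma>\<bar> < 1"
  shows "eta d \<gamma> Tstar \<pi> = goal_prob d \<pi> * \<gamma>\<^sup>2 / (1 - \<gamma>)"
  using sums_delayed_geometric[OF assms(2), of 2 "goal_prob d \<pi>"]
  by (simp add: eta_def eta_from_eq_suminf[OF assms(1)] distr_Tstar_SG[OF assms(1)] sums_iff)

lemma goal_prob_le_one:
  assumes \<pi>: "\<pi> \<in> policies d"
  shows "goal_prob d \<pi> \<le> 1"
proof -
  have "goal_prob d \<pi> \<le> (\<Sum>a\<in>actions d. \<pi> S0 a * 1)"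
    unfolding goal_prob_def
    by (intro sum_mono mult_left_mono policy_le_one policy_nonneg) (auto simp: \<pi> states_eq)
  also have "\<dots> = 1"
    using policy_sum_eq_one[OF \<pi>, of S0] by (simp add: states_eq)
  finally show ?thesis .
qed

lemma SUP_eta_Tstar:
  assumes "d \<ge> 1" and \<gamma>: "\<bar>\<gamma>\<bar> < 1"
  shows "(SUP \<pi>\<in>policies d. eta d \<gamma> Tstar \<pi>) = \<gamma>\<^sup>2 / (1 - \<gamma>)"
proof (rule cSup_eq_maximum)
  define \<pi>\<^sub>o\<^sub>p\<^sub>t :: "st \<Rightarrow> nat \<Rightarrow> real"
    where "\<pi>\<^sub>o\<^sub>p\<^sub>t s a = (case s of Si i \<Rightarrow> of_bool (a = i) | _ \<Rightarrow> of_bool (a = 1))" for s a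
  have opt: "\<pi>\<^sub>o\<^sub>p\<^sub>t \<in> policies d"
    using assms(1) by (auto simp: policies_def states_eq \<pi>\<^sub>o\<^sub>p\<^sub>t_def actions_def)
  moreover have "goal_prob d \<pi>\<^sub>o\<^sub>p\<^sub>t = 1"
    using assms(1) by (simp add: goal_prob_def \<pi>\<^sub>o\<^sub>p\<^sub>t_def actions_def)
  ultimately have "eta d \<gamma> Tstar \<pi>\<^sub>o\<^sub>p\<^sub>t = \<gamma>\<^sup>2 / (1 - \<gamma>)"
    by (simp add: eta_Tstar \<gamma>)
  with opt show "\<gamma>\<^sup>2 / (1 - \<gamma>) \<in> (\<lambda>\<pi>. eta d \<gamma> Tstar \<pi>) ` policies d"
    by (metis image_eqI)
next
  fix x assume "x \<in> (\<lambda>\<pi>. eta d \<gamma> Tstar \<pi>) ` policies d"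
  then obtain \<pi> where \<pi>: "\<pi> \<in> policies d" and "x = eta d \<gamma> Tstar \<pi>"
    by blast
  then have "x = goal_prob d \<pi> * (\<gamma>\<^sup>2 / (1 - \<gamma>))"
    by (simp add: eta_Tstar \<gamma>)
  moreover have "0 \<le> \<gamma>\<^sup>2 / (1 - \<gamma>)"
    using \<gamma> by simp
  ultimately show "x \<le> \<gamma>\<^sup>2 / (1 - \<gamma>)"
    using mult_right_mono[OF goal_prob_le_one[OF \<pi>]] by (metis mult_1)
qed

lemma Q_star_cong:
  "rew s a = rew s' b \<Longrightarrow> T s a = T s' b \<Longrightarrow> Q_star d \<gamma> T s a = Q_star d \<gamma> T s' b"
  by (simp add: Q_star_def Q_pi_def)

lemma greedy_set_nonempty:
  assumes "d \<ge> 1"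
  shows "greedy_set d \<gamma> T s \<noteq> {}"
proof -
  let ?Q = "Q_star d \<gamma> T s"
  have "actions d \<noteq> {}"
    using assms by (simp add: actions_def)
  then have "Max (?Q ` actions d) \<in> ?Q ` actions d"
    by (intro Max_in) simp_all
  then obtain a where "a \<in> actions d" "?Q a = Max (?Q ` actions d)"
    by auto
  then have "a \<in> greedy_set d \<gamma> T s"
    by (simp add: greedy_set_def)
  then show ?thesis by blast
qed

lemma greedy_in_policies:
  assumes "d \<ge> 1"
  shows "greedy d \<gamma> T \<in> policies d"
  unfolding policies_def
proof (intro CollectI ballI conjI)
  fix s
  let ?G = "greedy_set d \<gamma> T s"
  have "?G \<subseteq> actions d" "finite ?G" "?G \<noteq> {}"
    using greedy_set_nonempty[OF assms] by (auto simp: greedy_set_def intro: finite_subset)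
  then show "(\<Sum>a\<in>actions d. greedy d \<gamma> T s a) = 1"
    by (simp add: greedy_def sum.If_cases Int_absorb1)
qed (simp add: greedy_def)

lemma greedy_eq_uniform:
  assumes "\<And>a b. a \<in> actions d \<Longrightarrow> b \<in> actions d \<Longrightarrow> Q_star d \<gamma> T s a = Q_star d \<gamma> T s b"
    and "a \<in> actions d"
  shows "greedy d \<gamma> T s a = 1 / real d"
proof -
  have "greedy_set d \<gamma> T s = actions d"
    unfolding greedy_set_def by (auto intro: eq_refl[OF assms(1)])
  then show ?thesis
    using assms(2) by (simp add: greedy_def)
qed

lemma Ttheta_S0: "Ttheta \<theta> S0 a = (\<lambda>s'. if s' = Si a then 1 else 0)"
  by (auto simp: Ttheta_def Tstar_def)

lemma distr_Ttheta_SG: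
  assumes \<pi>: "\<pi> \<in> policies d" and a: "a \<in> actions d"
  shows "distr d (Ttheta \<theta>) \<pi> (Ttheta \<theta> S0 a) t SG
    = (if t < 1 then 0 else (\<Sum>c\<in>actions d. \<pi> (Si a) c * (1 + \<theta> c) / 2))"
proof -
  define \<mu> where "\<mu> = distr d (Ttheta \<theta>) \<pi> (Ttheta \<theta> S0 a)"
  have \<mu>1: "\<mu> (Suc 0) s' = (\<Sum>c\<in>actions d. \<pi> (Si a) c * Ttheta \<theta> (Si a) c s')" for s'
    using a by (simp add: \<mu>_def distr_def Ttheta_S0 step_point_mass states_eq)
  have absorbed: "\<mu> t = \<mu> (Suc 0)" if "1 \<le> t" for t
    unfolding \<mu>_def
  proof (rule distr_absorbed)
    show "distr d (Ttheta \<theta>) \<pi> (Ttheta \<theta> S0 a) (Suc 0) s = 0" if "s \<notin> {SG, SB}" for s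
      using that \<mu>1[of s] by (simp add: \<mu>_def Ttheta_def)
  qed (use \<pi> that in \<open>simp_all add: Ttheta_def fun_eq_iff\<close>)
  show ?thesis
  proof (cases "t < 1")
    case True
    then show ?thesis by (simp add: \<mu>_def distr_def Ttheta_S0)
  next
    case False
    then show ?thesis
      using absorbed[of t] \<mu>1[of SG] by (simp add: \<mu>_def Ttheta_def)
  qed
qed

lemma Q_pi_Ttheta_S0:
  assumes "\<pi> \<in> policies d" and "a \<in> actions d" and "\<bar>\<gamma>\<bar> < 1"
  shows "Q_pi d \<gamma> (Ttheta \<theta>) \<pi> S0 a
    = (\<Sum>c\<in>actions d. \<pi> (Si a) c * (1 + \<theta> c) / 2) * \<gamma>\<^sup>2 / (1 - \<gamma>)"
  using sums_delayed_geometric[OF assms(3), of 1 "\<Sum>c\<in>actions d. \<pi> (Si a) c * (1 + \<theta> c) / 2"]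
  by (simp add: Q_pi_def rew_def eta_from_eq_suminf[OF assms(1)] distr_Ttheta_SG[OF assms(1,2)]
      sums_iff power2_eq_square)

lemma greedy_Ttheta_S0:
  assumes "a \<in> actions d" and "\<bar>\<gamma>\<bar> < 1"
  shows "greedy d \<gamma> (Ttheta \<theta>) S0 a = 1 / real d"
proof (rule greedy_eq_uniform[OF _ assms(1)])
  define F :: "(nat \<Rightarrow> real) \<Rightarrow> real"
    where "F \<rho> = (\<Sum>c\<in>actions d. \<rho> c * (1 + \<theta> c) / 2) * \<gamma>\<^sup>2 / (1 - \<gamma>)" for \<rho>
  have Q: "Q_star d \<gamma> (Ttheta \<theta>) S0 b = Sup (F ` (\<lambda>\<pi>. \<pi> (Si b)) ` policies d)"
    if "b \<in> actions d" for b
    unfolding Q_star_def image_image F_def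
    by (rule arg_cong[where f = Sup], rule image_cong) (simp_all add: Q_pi_Ttheta_S0 that assms(2))
  fix b c assume "b \<in> actions d" "c \<in> actions d"
  then show "Q_star d \<gamma> (Ttheta \<theta>) S0 b = Q_star d \<gamma> (Ttheta \<theta>) S0 c"
    by (simp add: Q policy_rows_eq[of "Si b" d "Si c"] states_eq)
qed

lemma greedy_Ttheta_Si: "greedy d \<gamma> (Ttheta \<theta>) (Si i) = greedy d \<gamma> (Ttheta \<theta>) (Si j)"
proof -
  have "Q_star d \<gamma> (Ttheta \<theta>) (Si i) = Q_star d \<gamma> (Ttheta \<theta>) (Si j)"
    by (rule ext, rule Q_star_cong) (simp_all add: rew_def Ttheta_def fun_eq_iff)
  then show ?thesis
    by (simp add: greedy_def greedy_set_def fun_eq_iff)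
qed

lemma goal_prob_greedy_Ttheta:
  assumes "d \<ge> 1" and "\<bar>\<gamma>\<bar> < 1"
  shows "goal_prob d (greedy d \<gamma> (Ttheta \<theta>)) = 1 / real d"
proof -
  let ?g = "greedy d \<gamma> (Ttheta \<theta>)"
  have "goal_prob d ?g = (\<Sum>a\<in>actions d. 1 / real d * ?g (Si 1) a)"
    unfolding goal_prob_def
    by (intro sum.cong refl arg_cong2[where f = "(*)"] greedy_Ttheta_S0 assms(2) fun_cong[OF greedy_Ttheta_Si])
  also have "\<dots> = 1 / real d"
    using policy_sum_eq_one[OF greedy_in_policies[OF assms(1)], of "Si 1"] assms(1)
    by (simp add: sum_divide_distrib[symmetric] states_eq actions_def)
  finally show ?thesis .
qed

theorem theorem2:
  fixes d :: nat and \<gamma> :: real and \<theta> :: "nat \<Rightarrow> real"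
  assumes "d \<ge> 1" and "0 \<le> \<gamma>" and "\<gamma> < 1"
    and "\<forall>j \<in> {1..d}. -1 \<le> \<theta> j \<and> \<theta> j \<le> 1"
  shows "(SUP \<pi>\<in>policies d. eta d \<gamma> Tstar \<pi>) - eta d \<gamma> Tstar (greedy d \<gamma> (Ttheta \<theta>))
           \<ge> (real d - 1) * \<gamma>^2 / (real d * (1 - \<gamma>))"
proof -
  define K where "K = \<gamma>\<^sup>2 / (1 - \<gamma>)"
  have \<gamma>: "\<bar>\<gamma>\<bar> < 1"
    using assms(2,3) by simp
  have "(SUP \<pi>\<in>policies d. eta d \<gamma> Tstar \<pi>) = K"
    unfolding K_def by (rule SUP_eta_Tstar[OF assms(1) \<gamma>])
  moreover have "eta d \<gamma> Tstar (greedy d \<gamma> (Ttheta \<theta>)) = K / real d"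
    using eta_Tstar[OF greedy_in_policies[OF assms(1)] \<gamma>] goal_prob_greedy_Ttheta[OF assms(1) \<gamma>]
    by (simp add: K_def)
  moreover have "K - K / real d = (real d - 1) / real d * K"
    using assms(1) by (simp add: field_simps)
  ultimately show ?thesis
    by (simp add: K_def)
qed

end
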